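(* Let $m,n\ge0$, $0\le k\le\min(m,n)$, and let $i,j$ be integers with $0\le i\le m$, $0\le j\le n$, $k\le i+j\le m+n-k$. Then $$C_{m,n,k}(i,j)=\frac{(-1)^k}{D(m,n,k)}\,c_{m,n,k}(m-i,\,n-j),$$ where $$D(m,n,k)=\binom{m+n-k+1}{k}\binom{m+n-2k}{m-k}=\frac{m+n-k+1}{m+n-2k+1}\binom{m+n-k}{m-k,\ n-k,\ k}.$$
   Context: Multinomial coefficients: $\binom{a+b+c}{a,\ b,\ c}=\frac{(a+b+c)!}{a!\,b!\,c!}$. Let $e,f,h$ be the standard basis of $\mathfrak{sl}(2,\mathbb{C})$. $V(n)$ is the irreducible representation of highest weight $n$ with fixed highest weight vector $\phi_n$; $\{f^i\phi_n\}_{0\le i\le n}$ is a basis, $f^{n+1}\phi_n=0$. $\mathfrak{sl}(2)$ acts on $V(m)\otimes V(n)$ by $X(v\otimes w)=Xv\otimes w+v\otimes Xw$. For $0\le k\le\min(m,n)$, $\phi_{m,n,k}=\sum_{l=0}^{k}(-1)^l\binom{m-l}{k-l}\binom{n-k+l}{l} f^l\phi_m\otimes f^{k-l}\phi_n$; it is a highest weight vector of weight $m+n-2k$ generating a copy of $V(m+n-2k)$ with basis $f^a\phi_{m,n,k}$, $0\le a\le m+n-2k$, and $V(m)\otimes V(n)$ is the direct sum of these copies. The coordinates $c_{m,n,k}(i,j)$ are defined by $f^{p-k}\phi_{m,n,k}=\sum_{i+j=p,\,0\le i\le m,\,0\le j\le n} c_{m,n,k}(i,j)\, f^i\phi_m\otimes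 f^j\phi_n$ for $k\le p\le m+n-k$. The Clebsch–Gordan coefficients $C_{m,n,k}(i,j)$ are defined by $f^i\phi_m\otimes f^j\phi_n=\sum_{k} C_{m,n,k}(i,j)\, f^{i+j-k}\phi_{m,n,k}$, sum over $0\le k\le\min(m,n)$ with $k\le i+j\le m+n-k$. *)

theory Defs
  imports Complex_Main
begin

text \<open>Model of V(m) \<otimes> V(n): a vector is a function nat \<Rightarrow> nat \<Rightarrow> complex, where v i j is the
coefficient of the basis vector f^i phi_m \<otimes> f^j phi_n (0 \<le> i \<le> m, 0 \<le> j \<le> n);
entries outside this box are kept zero.\<close>

type_synonym tvec = "nat \<Rightarrow> nat \<Rightarrow> complex"

definition basis_vec :: "nat \<Rightarrow> nat \<Rightarrow> nat \<Rightarrow> nat \<Rightarrow> tvec" where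
  "basis_vec m n i j = (\<lambda>a b. if a = i \<and> b = j \<and> i \<le> m \<and> j \<le> n then 1 else 0)"

text \<open>Action of f on V(m) \<otimes> V(n): f(f^a phi_m \<otimes> f^b phi_n) =
  f^(a+1) phi_m \<otimes> f^b phi_n + f^a phi_m \<otimes> f^(b+1) phi_n, with f^(m+1) phi_m = 0, f^(n+1) phi_n = 0.\<close>
definition f_act :: "nat \<Rightarrow> nat \<Rightarrow> tvec \<Rightarrow> tvec" where
  "f_act m n v = (\<lambda>a b. if a \<le> m \<and> b \<le> n then
       (if 1 \<le> a then v (a - 1) b else 0) + (if 1 \<le> b then v a (b - 1) else 0)
     else 0)"

definition f_pow :: "nat \<Rightarrow> nat \<Rightarrow> nat \<Rightarrow> tvec \<Rightarrow> tvec" where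
  "f_pow m n p = (f_act m n) ^^ p"

definition phi :: "nat \<Rightarrow> nat \<Rightarrow> nat \<Rightarrow> tvec" where
  "phi m n k = (\<lambda>a b. \<Sum>l = 0..k. (-1) ^ l * of_nat ((m - l) choose (k - l))
        * of_nat ((n - k + l) choose l) * basis_vec m n l (k - l) a b)"

definition c_coord :: "nat \<Rightarrow> nat \<Rightarrow> nat \<Rightarrow> nat \<Rightarrow> nat \<Rightarrow> complex" where
  "c_coord m n k i j = f_pow m n (i + j - k) (phi m n k) i j"

definition adm :: "nat \<Rightarrow> nat \<Rightarrow> nat \<Rightarrow> nat \<Rightarrow> nat \<Rightarrow> bool" where
  "adm m n i j k \<longleftrightarrow> k \<le> min m n \<and> k \<le> i + j \<and> i + j + k \<le> m + n"

definition CG_family :: "nat \<Rightarrow> nat \<Rightarrow> nat \<Rightarrow> nat \<Rightarrow> nat \<Rightarrow> complex" where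
  "CG_family m n i j = (THE C. (\<forall>k. \<not> adm m n i j k \<longrightarrow> C k = 0) \<and>
      basis_vec m n i j = (\<lambda>a b. \<Sum>k = 0..min m n. C k * f_pow m n (i + j - k) (phi m n k) a b))"

definition CG :: "nat \<Rightarrow> nat \<Rightarrow> nat \<Rightarrow> nat \<Rightarrow> nat \<Rightarrow> complex" where
  "CG m n k i j = CG_family m n i j k"

definition Dnorm :: "nat \<Rightarrow> nat \<Rightarrow> nat \<Rightarrow> nat" where
  "Dnorm m n k = ((m + n - k + 1) choose k) * ((m + n - 2 * k) choose (m - k))"

end

theory Submission
  imports Defs "Jordan_Normal_Form.Determinant" "HOL-Computational_Algebra.Formal_Power_Series"
begin

text \<open>On V(m) \<otimes> V(n) consider the bilinear form with
  <f^a phi_m \<otimes> f^b phi_n, f^a' phi_m \<otimes> f^b' phi_n> = 1 if a + a' = m and b + b' = n, and 0 otherwise;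
  both e and f are self-adjoint for it. Since e phi_{m,n,k} = 0, moving powers of f across the form
  and using the sl(2) relation e f^(s+1) w = (s+1)(weight - s) f^s w shows that f^s phi_{m,n,k} and
  f^s' phi_{m,n,k'} with s + s' + k + k' = m + n are orthogonal unless k = k'. For k = k' the value is
  (-1)^k D(m,n,k): the lowest weight vector f^(m+n-2k) phi_{m,n,k} is killed by f, so its coordinates
  alternate in sign, its corner coordinate is an alternating binomial sum, and what is left is a
  Chu--Vandermonde sum. Pairing the expansion of f^i phi_m \<otimes> f^j phi_n against
  f^(m+n-i-j-k) phi_{m,n,k}, whose coordinate at (m-i, n-j) is c_{m,n,k}(m-i, n-j), isolates
  C_{m,n,k}(i,j). The expansion exists because the same orthogonality exhibits a right, hence
  two-sided, inverse of the square matrix of coordinates of the f^(i+j-k) phi_{m,n,k} on the weight space.\<close>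

section \<open>The operators e and f on V(m) \<otimes> V(n)\<close>

lemma f_pow_0 [simp]: "f_pow m n 0 v = v"
  by (simp add: f_pow_def)

lemma f_pow_Suc: "f_pow m n (Suc s) v = f_act m n (f_pow m n s v)"
  by (simp add: f_pow_def)

lemma f_pow_add: "f_pow m n (s + t) v = f_pow m n s (f_pow m n t v)"
  by (simp add: f_pow_def funpow_add)

lemma f_pow_Suc_right: "f_pow m n (Suc s) v = f_pow m n s (f_act m n v)"
  using f_pow_add[of m n s 1 v] by (simp add: f_pow_def)

lemma f_act_eq:
  "a \<le> m \<Longrightarrow> b \<le> n \<Longrightarrow>
   f_act m n v a b = (if 1 \<le> a then v (a - 1) b else 0) + (if 1 \<le> b then v a (b - 1) else 0)"
  by (simp add: f_act_def)

lemma f_act_scale: "f_act m n (\<lambda>a b. c * w a b) = (\<lambda>a b. c * f_act m n w a b)"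
  by (auto simp: f_act_def fun_eq_iff algebra_simps)

lemma f_act_zero: "f_act m n (\<lambda>a b. 0) = (\<lambda>a b. 0)"
  by (auto simp: f_act_def fun_eq_iff)

definition in_box :: "nat \<Rightarrow> nat \<Rightarrow> tvec \<Rightarrow> bool" where
  "in_box m n v \<longleftrightarrow> (\<forall>a b. \<not> (a \<le> m \<and> b \<le> n) \<longrightarrow> v a b = 0)"

text \<open>A vector supported on the antidiagonal a + b = p is a weight vector of weight m + n - 2p.\<close>
definition homogeneous :: "nat \<Rightarrow> tvec \<Rightarrow> bool" where
  "homogeneous p v \<longleftrightarrow> (\<forall>a b. a + b \<noteq> p \<longrightarrow> v a b = 0)"

lemma in_box_f_act: "in_box m n (f_act m n v)"
  by (simp add: in_box_def f_act_def)

lemma in_box_f_pow: "in_box m n v \<Longrightarrow> in_box m n (f_pow m n s v)"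
  by (cases s) (simp_all add: f_pow_Suc in_box_f_act)

lemma homogeneous_f_act: "homogeneous p v \<Longrightarrow> homogeneous (Suc p) (f_act m n v)"
  unfolding homogeneous_def f_act_def by auto

lemma homogeneous_f_pow: "homogeneous p v \<Longrightarrow> homogeneous (p + s) (f_pow m n s v)"
  by (induction s) (auto simp: f_pow_Suc homogeneous_f_act)

lemma in_box_homogeneous_zero:
  "in_box m n v \<Longrightarrow> homogeneous p v \<Longrightarrow> \<not> (a \<le> m \<and> b \<le> n \<and> a + b = p) \<Longrightarrow> v a b = 0"
  unfolding in_box_def homogeneous_def by blast

definition phi_coeff :: "nat \<Rightarrow> nat \<Rightarrow> nat \<Rightarrow> nat \<Rightarrow> complex" where
  "phi_coeff m n k l = (-1) ^ l * of_nat ((m - l) choose (k - l)) * of_nat ((n - k + l) choose l)"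

lemma phi_eq:
  assumes "k \<le> min m n"
  shows "phi m n k a b = (if a \<le> k \<and> b = k - a then phi_coeff m n k a else 0)"
proof -
  have "phi m n k a b =
      (\<Sum>l = 0..k. if l = a then (if a \<le> k \<and> b = k - a then phi_coeff m n k a else 0) else 0)"
    unfolding phi_def basis_vec_def phi_coeff_def by (rule sum.cong) (use assms in auto)
  then show ?thesis
    by (simp add: sum.delta)
qed

lemma in_box_phi: "k \<le> min m n \<Longrightarrow> in_box m n (phi m n k)"
  by (auto simp: in_box_def phi_eq)

lemma homogeneous_phi: "k \<le> min m n \<Longrightarrow> homogeneous k (phi m n k)"
  by (auto simp: homogeneous_def phi_eq)

text \<open>The action of e: e (f^a phi_m) = a (m - a + 1) f^(a-1) phi_m, and likewise on V(n).\<close>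
definition e_act :: "nat \<Rightarrow> nat \<Rightarrow> tvec \<Rightarrow> tvec" where
  "e_act m n v = (\<lambda>a b. if a \<le> m \<and> b \<le> n then
      of_nat ((a + 1) * (m - a)) * v (a + 1) b + of_nat ((b + 1) * (n - b)) * v a (b + 1) else 0)"

lemma e_act_eq:
  assumes "a \<le> m" "b \<le> n"
  shows "e_act m n v a b =
    (of_nat a + 1) * (of_nat m - of_nat a) * v (a + 1) b
    + (of_nat b + 1) * (of_nat n - of_nat b) * v a (b + 1)"
proof -
  have "of_nat ((a + 1) * (m - a)) = (of_nat a + 1) * (of_nat m - of_nat a :: complex)"
    "of_nat ((b + 1) * (n - b)) = (of_nat b + 1) * (of_nat n - of_nat b :: complex)"
    using assms by (simp_all only: of_nat_mult of_nat_diff of_nat_add of_nat_1)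
  then show ?thesis
    using assms by (simp only: e_act_def if_True simp_thms)
qed

lemma e_act_zero: "e_act m n (\<lambda>a b. 0) = (\<lambda>a b. 0)"
  by (auto simp: e_act_def fun_eq_iff)

lemma phi_coeff_cancel:
  assumes "k \<le> min m n" "a < k"
  shows "of_nat ((a + 1) * (m - a)) * phi_coeff m n k (a + 1)
    + of_nat ((k - a) * (n - k + a + 1)) * phi_coeff m n k a = (0::complex)"
proof -
  define X0 Y0 X1 Y1 where "X0 = (m - a) choose (k - a)" and "Y0 = (n - k + a) choose a"
    and "X1 = (m - (a + 1)) choose (k - (a + 1))" and "Y1 = (n - k + (a + 1)) choose (a + 1)"
  have "(m - a) * X1 = (k - a) * X0"
    using times_binomial_minus1_eq[of "k - a" "m - a"] assms(2) unfolding X0_def X1_def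
    by (simp add: diff_diff_add)
  moreover have "(a + 1) * Y1 = (n - k + a + 1) * Y0"
    using Suc_times_binomial[of a "n - k + a"] unfolding Y0_def Y1_def by simp
  ultimately have "((a + 1) * (m - a)) * (X1 * Y1) = ((k - a) * (n - k + a + 1)) * (X0 * Y0)"
    by (metis mult.assoc mult.left_commute)
  moreover have "of_nat ((a + 1) * (m - a)) * phi_coeff m n k (a + 1)
      = - ((-1) ^ a * (of_nat ((a + 1) * (m - a) * (X1 * Y1)) :: complex))"
    unfolding phi_coeff_def X1_def Y1_def of_nat_mult power_add power_one_right
    by (simp only: mult_ac mult_minus_left mult_minus_right mult_1_left)
  moreover have "of_nat ((k - a) * (n - k + a + 1)) * phi_coeff m n k a
      = (-1) ^ a * (of_nat ((k - a) * (n - k + a + 1) * (X0 * Y0)) :: complex)"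
    unfolding phi_coeff_def X0_def Y0_def of_nat_mult by (simp only: mult_ac)
  ultimately show ?thesis
    by simp
qed

lemma e_act_phi:
  assumes "k \<le> min m n"
  shows "e_act m n (phi m n k) = (\<lambda>a b. 0)"
proof (intro ext)
  fix a b
  show "e_act m n (phi m n k) a b = 0"
  proof (cases "a \<le> m \<and> b \<le> n \<and> a + b + 1 = k")
    case True
    then have a: "a < k" and b: "b = k - (a + 1)" "b + 1 = k - a" "n - b = n - k + a + 1"
      using assms by auto
    moreover have "phi m n k (a + 1) b = phi_coeff m n k (a + 1)" "phi m n k a (b + 1) = phi_coeff m n k a"
      using a b assms by (simp_all add: phi_eq)
    ultimately show ?thesis
      using True phi_coeff_cancel[OF assms a] by (simp add: e_act_def)
  next
    case False
    then show ?thesis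
      using assms by (auto simp: e_act_def phi_eq)
  qed
qed

lemma e_f_commute:
  assumes "in_box m n v"
  shows "e_act m n (f_act m n v) a b =
    f_act m n (e_act m n v) a b + (of_nat (m + n) - of_nat (2 * (a + b))) * v a b"
proof (cases "a \<le> m \<and> b \<le> n")
  case False
  then show ?thesis
    using assms by (auto simp: e_act_def f_act_def in_box_def)
next
  case True
  then have am: "a \<le> m" and bn: "b \<le> n" by auto
  have "(of_nat a + 1) * (of_nat m - of_nat a) * f_act m n v (a + 1) b
      = (of_nat a + 1) * (of_nat m - of_nat a) * (v a b + (if 1 \<le> b then v (a + 1) (b - 1) else (0::complex)))"
    by (cases "a = m") (use am bn in \<open>auto simp: f_act_def\<close>)
  moreover have "(of_nat b + 1) * (of_nat n - of_nat b) * f_act m n v a (b + 1)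
      = (of_nat b + 1) * (of_nat n - of_nat b) * (v a b + (if 1 \<le> a then v (a - 1) (b + 1) else (0::complex)))"
    by (cases "b = n") (use am bn in \<open>auto simp: f_act_def\<close>)
  ultimately have L: "e_act m n (f_act m n v) a b =
      (of_nat a + 1) * (of_nat m - of_nat a) * (v a b + (if 1 \<le> b then v (a + 1) (b - 1) else 0))
    + (of_nat b + 1) * (of_nat n - of_nat b) * (v a b + (if 1 \<le> a then v (a - 1) (b + 1) else 0))"
    by (simp only: e_act_eq[OF am bn])
  have R: "f_act m n (e_act m n v) a b =
      (of_nat a * (of_nat m - of_nat a + 1) * v a b
        + (if 1 \<le> a then (of_nat b + 1) * (of_nat n - of_nat b) * v (a - 1) (b + 1) else 0))
    + ((if 1 \<le> b then (of_nat a + 1) * (of_nat m - of_nat a) * v (a + 1) (b - 1) else 0)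
        + of_nat b * (of_nat n - of_nat b + 1) * v a b)"
    using am bn by (cases a; cases b) (simp_all add: f_act_eq e_act_eq algebra_simps)
  show ?thesis
    unfolding L R using am bn by (simp add: algebra_simps of_nat_diff)
qed

lemma e_act_f_pow_highest_weight:
  assumes "in_box m n v" "homogeneous p v" "e_act m n v = (\<lambda>a b. 0)"
  shows "e_act m n (f_pow m n (Suc s) v) =
    (\<lambda>a b. of_nat (Suc s) * (of_nat (m + n) - of_nat (2 * p + s)) * f_pow m n s v a b)"
proof (induction s)
  case 0
  show ?case
  proof (intro ext)
    fix a b
    have "e_act m n (f_pow m n 1 v) a b = (of_nat (m + n) - of_nat (2 * (a + b))) * v a b"
      using e_f_commute[OF assms(1)] by (simp add: f_pow_Suc assms(3) f_act_zero)
    also have "\<dots> = (of_nat (m + n) - of_nat (2 * p)) * v a b"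
      using assms(2) unfolding homogeneous_def by (cases "a + b = p") simp_all
    finally show "e_act m n (f_pow m n (Suc 0) v) a b =
        of_nat (Suc 0) * (of_nat (m + n) - of_nat (2 * p + 0)) * f_pow m n 0 v a b"
      by simp
  qed
next
  case (Suc s)
  show ?case
  proof (intro ext)
    fix a b
    let ?w = "f_pow m n (Suc s) v"
    have "e_act m n (f_pow m n (Suc (Suc s)) v) a b =
        f_act m n (e_act m n ?w) a b + (of_nat (m + n) - of_nat (2 * (a + b))) * ?w a b"
      using e_f_commute[OF in_box_f_pow[OF assms(1)]] by (simp only: f_pow_Suc[of m n "Suc s"])
    also have "f_act m n (e_act m n ?w) a b = of_nat (Suc s) * (of_nat (m + n) - of_nat (2 * p + s)) * ?w a b"
      unfolding Suc.IH f_act_scale by (simp add: f_pow_Suc)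
    also have "(of_nat (m + n) - of_nat (2 * (a + b))) * ?w a b = (of_nat (m + n) - of_nat (2 * (p + Suc s))) * ?w a b"
      using homogeneous_f_pow[OF assms(2), of "Suc s" m n] unfolding homogeneous_def
      by (cases "a + b = p + Suc s") simp_all
    finally show "e_act m n (f_pow m n (Suc (Suc s)) v) a b =
        of_nat (Suc (Suc s)) * (of_nat (m + n) - of_nat (2 * p + Suc s)) * f_pow m n (Suc s) v a b"
      by (simp add: algebra_simps)
  qed
qed

text \<open>Downward induction from f^(m+n+1) w = 0, which holds because f^(m+n+1) w leaves the box:
  e f^(s+1) w is a nonzero multiple of f^s w.\<close>
lemma highest_weight_vector_negative_weight:
  assumes "in_box m n w" "homogeneous p w" "e_act m n w = (\<lambda>a b. 0)" "m + n < 2 * p"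
  shows "w = (\<lambda>a b. 0)"
proof -
  have step: "f_pow m n s w = (\<lambda>a b. 0)" if "f_pow m n (Suc s) w = (\<lambda>a b. 0)" for s
  proof -
    have "(\<lambda>a b. of_nat (Suc s) * (of_nat (m + n) - of_nat (2 * p + s)) * f_pow m n s w a b) = (\<lambda>a b. 0)"
      using e_act_f_pow_highest_weight[OF assms(1-3), of s] that e_act_zero by simp
    moreover have "(of_nat (m + n) :: complex) \<noteq> of_nat (2 * p + s)"
      using assms(4) by (simp only: of_nat_eq_iff)
    ultimately show ?thesis
      by (auto simp: fun_eq_iff simp del: of_nat_Suc)
  qed
  have "f_pow m n (m + n + 1 - t) w = (\<lambda>a b. 0)" for t
  proof (induction t)
    case 0
    show ?case
      using in_box_homogeneous_zero[OF in_box_f_pow[OF assms(1)] homogeneous_f_pow[OF assms(2)]]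
      by (auto simp: fun_eq_iff)
  next
    case (Suc t)
    then show ?case
      using step[of "m + n - t"] by (cases "t \<le> m + n") (simp_all add: Suc_diff_le)
  qed
  from this[of "m + n + 1"] show ?thesis
    by simp
qed

section \<open>An invariant bilinear form\<close>

definition pairing :: "nat \<Rightarrow> nat \<Rightarrow> tvec \<Rightarrow> tvec \<Rightarrow> complex" where
  "pairing m n x y = (\<Sum>a\<le>m. \<Sum>b\<le>n. x a b * y (m - a) (n - b))"

lemma sum_atMost_reflect: "(\<Sum>a\<le>m. g (m - a)) = (\<Sum>a\<le>(m::nat). g a)"
  using sum.nat_diff_reindex[of g "Suc m"] by (simp add: lessThan_Suc_atMost)

lemma pairing_commute: "pairing m n x y = pairing m n y x"
proof -
  have "pairing m n x y = (\<Sum>a\<le>m. \<Sum>b\<le>n. x (m - a) b * y (m - (m - a)) (n - b))"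
    unfolding pairing_def by (rule sum_atMost_reflect[symmetric])
  also have "\<dots> = (\<Sum>a\<le>m. \<Sum>b\<le>n. x (m - a) (n - b) * y (m - (m - a)) (n - (n - b)))"
    by (intro sum.cong refl sum_atMost_reflect[symmetric])
  also have "\<dots> = pairing m n y x"
    unfolding pairing_def by (intro sum.cong refl) (simp add: mult.commute)
  finally show ?thesis .
qed

lemma sum_atMost_shift_down:
  "(\<Sum>a\<le>(m::nat). (if 1 \<le> a then g (a - 1) else 0) * h (m - a)) =
   (\<Sum>a\<le>m. g a * (if 1 \<le> m - a then h (m - a - 1) else (0::complex)))"
proof (cases m)
  case (Suc m')
  have "(\<Sum>a\<le>m. (if 1 \<le> a then g (a - 1) else 0) * h (m - a)) = (\<Sum>a\<le>m'. g a * h (m' - a))"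
    unfolding Suc sum.atMost_Suc_shift by simp
  also have "\<dots> = (\<Sum>a\<le>m. g a * (if 1 \<le> m - a then h (m - a - 1) else 0))"
    unfolding Suc sum.atMost_Suc by (auto intro!: sum.cong simp: Suc_diff_le)
  finally show ?thesis .
qed simp

lemma sum_atMost_shift_up:
  "(\<Sum>a\<le>m. (of_nat a + 1) * (of_nat m - of_nat a) * g (a + 1) * h (m - a)) =
   (\<Sum>a\<le>m. g a * ((of_nat (m - a) + 1) * (of_nat m - of_nat (m - a)) * h (m - a + 1)) :: complex)"
proof (cases m)
  case (Suc m')
  have "(\<Sum>a\<le>m. (of_nat a + 1) * (of_nat m - of_nat a) * g (a + 1) * h (m - a)) =
      (\<Sum>a\<le>m'. (of_nat a + 1) * (of_nat m - of_nat a) * g (a + 1) * h (m - a))"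
    unfolding Suc sum.atMost_Suc by simp
  also have "\<dots> = (\<Sum>a\<le>m'. g (Suc a) *
      ((of_nat (m - Suc a) + 1) * (of_nat m - of_nat (m - Suc a)) * h (m - Suc a + 1)))"
    by (intro sum.cong refl) (auto simp: Suc of_nat_diff Suc_diff_le algebra_simps)
  also have "\<dots> = (\<Sum>a\<le>m. g a * ((of_nat (m - a) + 1) * (of_nat m - of_nat (m - a)) * h (m - a + 1)))"
    unfolding Suc sum.atMost_Suc_shift by simp
  finally show ?thesis .
qed simp

lemma pairing_f_act: "pairing m n (f_act m n x) y = pairing m n x (f_act m n y)"
proof -
  have "(\<Sum>a\<le>m. (if 1 \<le> a then x (a - 1) b else 0) * y (m - a) (n - b))
      = (\<Sum>a\<le>m. x a b * (if 1 \<le> m - a then y (m - a - 1) (n - b) else 0))" for b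
    using sum_atMost_shift_down[where g = "\<lambda>a. x a b" and h = "\<lambda>a. y a (n - b)"] by simp
  then have shift_a: "(\<Sum>a\<le>m. \<Sum>b\<le>n. (if 1 \<le> a then x (a - 1) b else 0) * y (m - a) (n - b))
      = (\<Sum>a\<le>m. \<Sum>b\<le>n. x a b * (if 1 \<le> m - a then y (m - a - 1) (n - b) else 0))"
    by (subst (1 2) sum.swap) simp
  have shift_b: "(\<Sum>a\<le>m. \<Sum>b\<le>n. (if 1 \<le> b then x a (b - 1) else 0) * y (m - a) (n - b))
      = (\<Sum>a\<le>m. \<Sum>b\<le>n. x a b * (if 1 \<le> n - b then y (m - a) (n - b - 1) else 0))"
    using sum_atMost_shift_down[where g = "x a" and h = "y (m - a)" for a] by simp
  have "pairing m n (f_act m n x) y =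
      (\<Sum>a\<le>m. \<Sum>b\<le>n. (if 1 \<le> a then x (a - 1) b else 0) * y (m - a) (n - b))
    + (\<Sum>a\<le>m. \<Sum>b\<le>n. (if 1 \<le> b then x a (b - 1) else 0) * y (m - a) (n - b))"
    unfolding pairing_def sum.distrib[symmetric] by (intro sum.cong refl) (simp add: f_act_eq algebra_simps)
  also have "\<dots> = pairing m n x (f_act m n y)"
    unfolding shift_a shift_b pairing_def sum.distrib[symmetric]
    by (intro sum.cong refl) (simp add: f_act_eq algebra_simps)
  finally show ?thesis .
qed

lemma pairing_e_act: "pairing m n (e_act m n x) y = pairing m n x (e_act m n y)"
proof -
  have "(\<Sum>a\<le>m. (of_nat a + 1) * (of_nat m - of_nat a) * x (a + 1) b * y (m - a) (n - b))
      = (\<Sum>a\<le>m. x a b * ((of_nat (m - a) + 1) * (of_nat m - of_nat (m - a)) * y (m - a + 1) (n - b)))" for b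
    using sum_atMost_shift_up[where g = "\<lambda>a. x a b" and h = "\<lambda>a. y a (n - b)"] by simp
  then have shift_a: "(\<Sum>a\<le>m. \<Sum>b\<le>n. (of_nat a + 1) * (of_nat m - of_nat a) * x (a + 1) b * y (m - a) (n - b))
      = (\<Sum>a\<le>m. \<Sum>b\<le>n. x a b * ((of_nat (m - a) + 1) * (of_nat m - of_nat (m - a)) * y (m - a + 1) (n - b)))"
    by (subst (1 2) sum.swap) simp
  have shift_b: "(\<Sum>a\<le>m. \<Sum>b\<le>n. (of_nat b + 1) * (of_nat n - of_nat b) * x a (b + 1) * y (m - a) (n - b))
      = (\<Sum>a\<le>m. \<Sum>b\<le>n. x a b * ((of_nat (n - b) + 1) * (of_nat n - of_nat (n - b)) * y (m - a) (n - b + 1)))"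
    using sum_atMost_shift_up[where g = "x a" and h = "y (m - a)" for a] by simp
  have "pairing m n (e_act m n x) y =
      (\<Sum>a\<le>m. \<Sum>b\<le>n. (of_nat a + 1) * (of_nat m - of_nat a) * x (a + 1) b * y (m - a) (n - b))
    + (\<Sum>a\<le>m. \<Sum>b\<le>n. (of_nat b + 1) * (of_nat n - of_nat b) * x a (b + 1) * y (m - a) (n - b))"
    unfolding pairing_def sum.distrib[symmetric] by (intro sum.cong refl) (simp add: e_act_eq algebra_simps)
  also have "\<dots> = pairing m n x (e_act m n y)"
    unfolding shift_a shift_b pairing_def sum.distrib[symmetric]
    by (intro sum.cong refl) (simp add: e_act_eq algebra_simps)
  finally show ?thesis .
qed

lemma pairing_f_pow: "pairing m n (f_pow m n s x) y = pairing m n x (f_pow m n s y)"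
proof (induction s arbitrary: y)
  case (Suc s)
  have "pairing m n (f_pow m n (Suc s) x) y = pairing m n (f_pow m n s x) (f_act m n y)"
    by (simp add: f_pow_Suc pairing_f_act)
  also have "\<dots> = pairing m n x (f_pow m n (Suc s) y)"
    by (simp add: Suc.IH f_pow_Suc_right)
  finally show ?case .
qed simp

lemma pairing_scale_right: "pairing m n x (\<lambda>a b. c * y a b) = c * pairing m n x y"
  unfolding pairing_def by (simp add: sum_distrib_left ac_simps)

lemma pairing_zero_left: "pairing m n (\<lambda>a b. 0) y = 0"
  unfolding pairing_def by simp

lemma pairing_sum_left:
  "pairing m n (\<lambda>a b. \<Sum>k\<in>K. c k * g k a b) y = (\<Sum>k\<in>K. c k * pairing m n (g k) y)"
proof -
  have "pairing m n (\<lambda>a b. \<Sum>k\<in>K. c k * g k a b) y =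
      (\<Sum>a\<le>m. \<Sum>b\<le>n. \<Sum>k\<in>K. c k * (g k a b * y (m - a) (n - b)))"
    unfolding pairing_def by (simp add: sum_distrib_right sum_distrib_left ac_simps)
  also have "\<dots> = (\<Sum>a\<le>m. \<Sum>k\<in>K. \<Sum>b\<le>n. c k * (g k a b * y (m - a) (n - b)))"
    by (rule sum.cong[OF refl], rule sum.swap)
  also have "\<dots> = (\<Sum>k\<in>K. \<Sum>a\<le>m. \<Sum>b\<le>n. c k * (g k a b * y (m - a) (n - b)))"
    by (rule sum.swap)
  also have "\<dots> = (\<Sum>k\<in>K. c k * pairing m n (g k) y)"
    unfolding pairing_def by (simp add: sum_distrib_left)
  finally show ?thesis .
qed

lemma pairing_phi_left:
  assumes "k \<le> min m n"
  shows "pairing m n (phi m n k) y = (\<Sum>l\<le>k. phi_coeff m n k l * y (m - l) (n - (k - l)))"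
proof -
  have inner: "(\<Sum>b\<le>n. phi m n k a b * y (m - a) (n - b)) =
      (if a \<in> {..k} then phi_coeff m n k a * y (m - a) (n - (k - a)) else 0)" for a
  proof -
    have "(\<Sum>b\<le>n. phi m n k a b * y (m - a) (n - b)) =
        (\<Sum>b\<le>n. if b = k - a then (if a \<le> k then phi_coeff m n k a * y (m - a) (n - (k - a)) else 0) else 0)"
      by (rule sum.cong[OF refl]) (auto simp: phi_eq[OF assms])
    then show ?thesis
      using assms by (auto simp: sum.delta')
  qed
  have "pairing m n (phi m n k) y = (\<Sum>a\<in>{..m} \<inter> {..k}. phi_coeff m n k a * y (m - a) (n - (k - a)))"
    unfolding pairing_def inner by (rule sum.inter_restrict[symmetric]) simp
  also have "{..m} \<inter> {..k} = {..k}"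
    using assms by auto
  finally show ?thesis .
qed

lemma pairing_basis_vec_left:
  assumes "i \<le> m" "j \<le> n"
  shows "pairing m n (basis_vec m n i j) y = y (m - i) (n - j)"
proof -
  have "(\<Sum>b\<le>n. basis_vec m n i j a b * y (m - a) (n - b)) = (if a = i then y (m - i) (n - j) else 0)" for a
  proof -
    have "(\<Sum>b\<le>n. basis_vec m n i j a b * y (m - a) (n - b)) =
        (\<Sum>b\<le>n. if b = j then (if a = i then y (m - i) (n - j) else 0) else 0)"
      by (rule sum.cong[OF refl]) (use assms in \<open>auto simp: basis_vec_def\<close>)
    then show ?thesis
      using assms by simp
  qed
  then show ?thesis
    unfolding pairing_def using assms by simp
qed

section \<open>Binomial identities\<close>

lemma choose_as_negated_gchoose:
  "(of_nat ((a + j) choose j) :: 'a :: field_char_0) = (-1) ^ j * ((- (of_nat a + 1)) gchoose j)"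
proof -
  have "(- (of_nat a + 1) :: 'a) gchoose j = (-1) ^ j * ((of_nat a + 1 + of_nat j - 1) gchoose j)"
    by (rule gbinomial_minus)
  then show ?thesis
    by (simp add: binomial_gbinomial flip: power_mult_distrib)
qed

lemma sum_choose_upper_mult:
  "(\<Sum>j\<le>k. ((a + j) choose j) * ((b + (k - j)) choose (k - j))) = (a + b + k + 1) choose k"
proof -
  have "(of_nat (\<Sum>j\<le>k. ((a + j) choose j) * ((b + (k - j)) choose (k - j))) :: real)
      = (-1) ^ k * (\<Sum>j\<le>k. ((- (of_nat a + 1)) gchoose j) * ((- (of_nat b + 1)) gchoose (k - j)))"
    unfolding of_nat_sum of_nat_mult choose_as_negated_gchoose sum_distrib_left
    by (intro sum.cong refl) (simp add: power_add[symmetric] algebra_simps)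
  also have "\<dots> = (-1) ^ k * ((- (of_nat a + 1) + - (of_nat b + 1)) gchoose k)"
    using gbinomial_Vandermonde[of "- (of_nat a + 1) :: real" "- (of_nat b + 1)" k]
    by (simp only: atLeast0AtMost)
  also have "- (of_nat a + 1) + - (of_nat b + 1) = - (of_nat (a + b + 1) + (1::real))"
    by simp
  also have "(-1) ^ k * ((- (of_nat (a + b + 1) + 1)) gchoose k) = (of_nat ((a + b + 1 + k) choose k) :: real)"
    by (simp only: choose_as_negated_gchoose)
  finally show ?thesis
    by (simp only: of_nat_eq_iff add_ac)
qed

text \<open>The k-th finite difference of l \<mapsto> (N + l) choose r.\<close>
lemma alternating_sum_choose_shift:
  "(\<Sum>l\<le>k. (-1::int) ^ l * of_nat (k choose l) * of_nat ((N + l) choose r))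
   = (-1) ^ k * (if k \<le> r then of_nat (N choose (r - k)) else 0)"
proof (induction k arbitrary: N r)
  case (Suc k)
  have Pascal: "int (Suc k choose l) = int (k choose l) + (if l = 0 then 0 else int (k choose (l - 1)))" for l
    by (cases l) auto
  have "(\<Sum>l\<le>Suc k. (-1::int) ^ l * of_nat (Suc k choose l) * of_nat ((N + l) choose r))
     = (\<Sum>l\<le>Suc k. (-1::int) ^ l * of_nat (k choose l) * of_nat ((N + l) choose r))
     + (\<Sum>l\<le>Suc k. (-1::int) ^ l * (if l = 0 then 0 else of_nat (k choose (l - 1))) * of_nat ((N + l) choose r))"
    by (unfold Pascal; simp only: ring_distribs sum.distrib)
  also have "(\<Sum>l\<le>Suc k. (-1::int) ^ l * of_nat (k choose l) * of_nat ((N + l) choose r))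
       = (\<Sum>l\<le>k. (-1::int) ^ l * of_nat (k choose l) * of_nat ((N + l) choose r))"
    by simp
  also have "(\<Sum>l\<le>Suc k. (-1::int) ^ l * (if l = 0 then 0 else of_nat (k choose (l - 1))) * of_nat ((N + l) choose r))
       = - (\<Sum>l\<le>k. (-1::int) ^ l * of_nat (k choose l) * of_nat ((Suc N + l) choose r))"
    unfolding sum.atMost_Suc_shift by (simp add: sum_negf[symmetric])
  also have "(\<Sum>l\<le>k. (-1::int) ^ l * of_nat (k choose l) * of_nat ((N + l) choose r))
      + - (\<Sum>l\<le>k. (-1::int) ^ l * of_nat (k choose l) * of_nat ((Suc N + l) choose r))
      = (-1) ^ k * ((if k \<le> r then of_nat (N choose (r - k)) else 0)
        - (if k \<le> r then of_nat (Suc N choose (r - k)) else 0))"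
    unfolding Suc.IH by (simp add: algebra_simps)
  also have "\<dots> = (-1) ^ Suc k * (if Suc k \<le> r then of_nat (N choose (r - Suc k)) else 0)"
  proof (cases "k < r")
    case True
    then have "r - k = Suc (r - Suc k)"
      by simp
    then show ?thesis
      using True by simp
  qed auto
  finally show ?case .
qed simp

lemma choose_mult_exchange:
  assumes "l \<le> k" "k \<le> m" "k \<le> n"
  shows "((m - l) choose (k - l)) * ((n - k + l) choose l) * ((m + n - 2 * k) choose (m - l))
       = ((m + n - 2 * k) choose (m - k)) * (k choose l) * ((n - k + l) choose k)"
proof (cases "m - l \<le> m + n - 2 * k")
  case True
  define L where "L = m + n - 2 * k"
  have "m - k \<le> m - l" "L - (m - k) = n - k" "m - l - (m - k) = k - l" "k - l \<le> m - l"
    "m - l - (k - l) = m - k" "k \<le> n - k + l" "n - k + l - l = n - k"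
    using True assms unfolding L_def by arith+
  then have split_m: "(L choose (m - l)) * ((m - l) choose (k - l)) = (L choose (m - k)) * ((n - k) choose (k - l))"
    and split_n: "((n - k + l) choose k) * (k choose l) = ((n - k + l) choose l) * ((n - k) choose (k - l))"
    using choose_mult[of "m - k" "m - l" L] binomial_symmetric[of "k - l" "m - l"] True
      choose_mult[of l k "n - k + l"] assms(1) unfolding L_def by simp_all
  have "((m - l) choose (k - l)) * ((n - k + l) choose l) * (L choose (m - l))
      = ((L choose (m - l)) * ((m - l) choose (k - l))) * ((n - k + l) choose l)"
    by (simp only: mult_ac)
  also have "\<dots> = (L choose (m - k)) * (((n - k + l) choose l) * ((n - k) choose (k - l)))"
    unfolding split_m by (simp only: mult_ac)
  also have "\<dots> = (L choose (m - k)) * (k choose l) * ((n - k + l) choose k)"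
    unfolding split_n[symmetric] by (simp only: mult_ac)
  finally show ?thesis
    unfolding L_def .
next
  case False
  then have vanish: "(m + n - 2 * k) choose (m - l) = 0" "(n - k + l) choose k = 0"
    using assms by simp_all
  show ?thesis
    by (simp only: vanish mult_0_right)
qed

section \<open>The lowest weight vector f^(m+n-2k) phi_{m,n,k}\<close>

text \<open>The number of monotone lattice paths of length s + 1 from (i, j) to (a, b), split by the last step.\<close>
lemma lattice_path_count_step:
  "(if i \<le> a \<and> j \<le> b \<and> (a - i) + (b - j) = Suc s then Suc s choose (a - i) else 0) =
   (if 1 \<le> a \<and> i \<le> a - 1 \<and> j \<le> b \<and> (a - 1 - i) + (b - j) = s then s choose (a - 1 - i) else 0)
   + (if 1 \<le> b \<and> i \<le> a \<and> j \<le> b - 1 \<and> (a - i) + (b - 1 - j) = s then s choose (a - i) else 0)"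
proof (cases "i \<le> a \<and> j \<le> b \<and> (a - i) + (b - j) = Suc s")
  case True
  then obtain x y where "a = i + x" "b = j + y" "x + y = Suc s"
    by (metis add_diff_inverse_nat not_le)
  then show ?thesis
    by (cases x; cases y) auto
next
  case False
  then have "\<not> (1 \<le> a \<and> i \<le> a - 1 \<and> j \<le> b \<and> (a - 1 - i) + (b - j) = s)"
    "\<not> (1 \<le> b \<and> i \<le> a \<and> j \<le> b - 1 \<and> (a - i) + (b - 1 - j) = s)"
    by linarith+
  then show ?thesis
    using False by (simp only: if_False if_not_P add_0)
qed

lemma f_pow_basis_vec:
  assumes "i \<le> m" "j \<le> n" "a \<le> m" "b \<le> n"
  shows "f_pow m n s (basis_vec m n i j) a b =
    of_nat (if i \<le> a \<and> j \<le> b \<and> (a - i) + (b - j) = s then s choose (a - i) else 0)"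
  using assms(3,4)
proof (induction s arbitrary: a b)
  case 0
  then show ?case
    using assms(1,2) by (auto simp: basis_vec_def)
next
  case (Suc s)
  have "f_pow m n (Suc s) (basis_vec m n i j) a b =
      (if 1 \<le> a then f_pow m n s (basis_vec m n i j) (a - 1) b else 0)
      + (if 1 \<le> b then f_pow m n s (basis_vec m n i j) a (b - 1) else 0)"
    using Suc.prems by (simp add: f_pow_Suc f_act_eq)
  also have "(if 1 \<le> a then f_pow m n s (basis_vec m n i j) (a - 1) b else 0) =
      of_nat (if 1 \<le> a \<and> i \<le> a - 1 \<and> j \<le> b \<and> (a - 1 - i) + (b - j) = s then s choose (a - 1 - i) else 0)"
  proof (cases "1 \<le> a")
    case True
    then have "a - 1 \<le> m"
      using Suc.prems by simp
    with True show ?thesis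
      by (simp only: Suc.IH[OF _ Suc.prems(2)] if_True simp_thms)
  qed simp
  also have "(if 1 \<le> b then f_pow m n s (basis_vec m n i j) a (b - 1) else 0) =
      of_nat (if 1 \<le> b \<and> i \<le> a \<and> j \<le> b - 1 \<and> (a - i) + (b - 1 - j) = s then s choose (a - i) else 0)"
  proof (cases "1 \<le> b")
    case True
    then have "b - 1 \<le> n"
      using Suc.prems by simp
    with True show ?thesis
      by (simp only: Suc.IH[OF Suc.prems(1)] if_True simp_thms)
  qed simp
  finally show ?case
    by (simp only: lattice_path_count_step of_nat_add)
qed

lemma f_act_lowest_weight_vector:
  assumes "k \<le> min m n"
  shows "f_act m n (f_pow m n (m + n - 2 * k) (phi m n k)) = (\<lambda>a b. 0)"
proof -
  let ?L = "m + n - 2 * k"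
  have "e_act m n (f_pow m n (Suc ?L) (phi m n k)) =
      (\<lambda>a b. of_nat (Suc ?L) * (of_nat (m + n) - of_nat (2 * k + ?L)) * f_pow m n ?L (phi m n k) a b)"
    by (rule e_act_f_pow_highest_weight[OF in_box_phi[OF assms] homogeneous_phi[OF assms] e_act_phi[OF assms]])
  also have "2 * k + ?L = m + n"
    using assms by simp
  finally have "e_act m n (f_pow m n (Suc ?L) (phi m n k)) = (\<lambda>a b. 0)"
    by simp
  moreover have "m + n < 2 * (k + Suc ?L)"
    using assms by arith
  ultimately have "f_pow m n (Suc ?L) (phi m n k) = (\<lambda>a b. 0)"
    using highest_weight_vector_negative_weight in_box_f_pow[OF in_box_phi[OF assms]]
      homogeneous_f_pow[OF homogeneous_phi[OF assms]] by blast
  then show ?thesis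
    by (simp add: f_pow_Suc)
qed

lemma lowest_weight_vector_alternating:
  assumes "k \<le> min m n" "l \<le> k"
  shows "f_pow m n (m + n - 2 * k) (phi m n k) (m - l) (n - (k - l)) =
    (-1) ^ l * f_pow m n (m + n - 2 * k) (phi m n k) m (n - k)"
  using assms(2)
proof (induction l)
  case (Suc l)
  let ?psi = "f_pow m n (m + n - 2 * k) (phi m n k)"
  have "1 \<le> m - l" "1 \<le> n - (k - Suc l)" "m - l \<le> m" "n - (k - Suc l) \<le> n"
    "m - l - 1 = m - Suc l" "n - (k - Suc l) - 1 = n - (k - l)"
    using Suc.prems assms(1) by auto
  then have "?psi (m - Suc l) (n - (k - Suc l)) + ?psi (m - l) (n - (k - l)) = f_act m n ?psi (m - l) (n - (k - Suc l))"
    by (simp only: f_act_eq if_True)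
  also have "\<dots> = 0"
    using f_act_lowest_weight_vector[OF assms(1)] by simp
  finally have "?psi (m - Suc l) (n - (k - Suc l)) = - ?psi (m - l) (n - (k - l))"
    by (simp only: eq_neg_iff_add_eq_0)
  also have "?psi (m - l) (n - (k - l)) = (-1) ^ l * ?psi m (n - k)"
    using Suc.prems by (intro Suc.IH) simp
  finally show ?case
    by simp
qed simp

lemma f_pow_basis_vec_corner_reflected:
  assumes "k \<le> min m n" "l \<le> k"
  shows "f_pow m n (m + n - 2 * k) (basis_vec m n 0 k) (m - l) (n - (k - l)) =
    of_nat ((m + n - 2 * k) choose (m - l))"
proof (cases "k \<le> n - (k - l)")
  case True
  then have "0 \<le> m - l \<and> k \<le> n - (k - l) \<and> (m - l - 0) + (n - (k - l) - k) = m + n - 2 * k"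
    using assms by arith
  then show ?thesis
    using assms(1) by (simp only: f_pow_basis_vec min.boundedE diff_le_self le0 simp_thms if_True diff_zero)
next
  case False
  then have "m + n - 2 * k < m - l"
    using assms by arith
  then show ?thesis
    using False assms(1) by (simp add: f_pow_basis_vec)
qed

lemma phi_coeff_mult_choose:
  assumes "k \<le> min m n" "l \<le> k"
  shows "phi_coeff m n k l * of_nat ((m + n - 2 * k) choose (m - l)) =
    of_int ((-1) ^ l * of_nat (k choose l) * of_nat ((n - k + l) choose k)) * of_nat ((m + n - 2 * k) choose (m - k))"
proof -
  have "of_nat (((m - l) choose (k - l)) * ((n - k + l) choose l) * ((m + n - 2 * k) choose (m - l)))
     = (of_nat (((m + n - 2 * k) choose (m - k)) * (k choose l) * ((n - k + l) choose k)) :: complex)"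
    using choose_mult_exchange[OF assms(2)] assms(1) by simp
  then show ?thesis
    unfolding phi_coeff_def by (simp add: algebra_simps)
qed

text \<open>The corner coordinate is read off by pairing with f^0 phi_m \<otimes> f^k phi_n and moving f^(m+n-2k) across.\<close>
lemma lowest_weight_vector_corner:
  assumes "k \<le> min m n"
  shows "f_pow m n (m + n - 2 * k) (phi m n k) m (n - k) = (-1) ^ k * of_nat ((m + n - 2 * k) choose (m - k))"
proof -
  let ?L = "m + n - 2 * k"
  have kn: "k \<le> n"
    using assms by simp
  have "f_pow m n ?L (phi m n k) m (n - k) = pairing m n (basis_vec m n 0 k) (f_pow m n ?L (phi m n k))"
    using pairing_basis_vec_left[of 0 m k n] kn by simp
  also have "\<dots> = pairing m n (f_pow m n ?L (basis_vec m n 0 k)) (phi m n k)"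
    by (rule pairing_f_pow[symmetric])
  also have "\<dots> = pairing m n (phi m n k) (f_pow m n ?L (basis_vec m n 0 k))"
    by (rule pairing_commute)
  also have "\<dots> = (\<Sum>l\<le>k. phi_coeff m n k l * of_nat (?L choose (m - l)))"
    unfolding pairing_phi_left[OF assms]
    by (rule sum.cong[OF refl]) (simp only: f_pow_basis_vec_corner_reflected[OF assms] atMost_iff)
  also have "\<dots> = (\<Sum>l\<le>k. of_int ((-1) ^ l * of_nat (k choose l) * of_nat ((n - k + l) choose k))
      * of_nat (?L choose (m - k)))"
    by (rule sum.cong[OF refl]) (simp only: phi_coeff_mult_choose[OF assms] atMost_iff)
  also have "\<dots> = of_int (\<Sum>l\<le>k. (-1) ^ l * of_nat (k choose l) * of_nat ((n - k + l) choose k))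
      * of_nat (?L choose (m - k))"
    by (simp only: of_int_sum sum_distrib_right)
  also have "(\<Sum>l\<le>k. (-1::int) ^ l * of_nat (k choose l) * of_nat ((n - k + l) choose k)) = (-1) ^ k"
    using alternating_sum_choose_shift[of k "n - k" k] by simp
  finally show ?thesis
    by simp
qed

lemma pairing_phi_lowest_weight_vector:
  assumes "k \<le> min m n"
  shows "pairing m n (phi m n k) (f_pow m n (m + n - 2 * k) (phi m n k)) = (-1) ^ k * of_nat (Dnorm m n k)"
proof -
  let ?psi = "f_pow m n (m + n - 2 * k) (phi m n k)"
  have "(\<Sum>l\<le>k. ((m - l) choose (k - l)) * ((n - k + l) choose l)) =
      (\<Sum>j\<le>k. ((n - k + j) choose j) * ((m - k + (k - j)) choose (k - j)))"
    using assms by (intro sum.cong refl) auto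
  also have "\<dots> = ((n - k) + (m - k) + k + 1) choose k"
    by (rule sum_choose_upper_mult)
  also have "(n - k) + (m - k) + k + 1 = m + n - k + 1"
    using assms by simp
  finally have binomial_sum: "(\<Sum>l\<le>k. ((m - l) choose (k - l)) * ((n - k + l) choose l)) = (m + n - k + 1) choose k" .
  have "pairing m n (phi m n k) ?psi = (\<Sum>l\<le>k. phi_coeff m n k l * ?psi (m - l) (n - (k - l)))"
    by (rule pairing_phi_left[OF assms])
  also have "\<dots> = (\<Sum>l\<le>k. of_nat (((m - l) choose (k - l)) * ((n - k + l) choose l)) * ?psi m (n - k))"
  proof (rule sum.cong[OF refl])
    fix l
    assume "l \<in> {..k}"
    then have "l \<le> k"
      by simp
    then show "phi_coeff m n k l * ?psi (m - l) (n - (k - l)) =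
        of_nat (((m - l) choose (k - l)) * ((n - k + l) choose l)) * ?psi m (n - k)"
      unfolding lowest_weight_vector_alternating[OF assms \<open>l \<le> k\<close>] phi_coeff_def
      by (simp add: algebra_simps flip: power_mult_distrib)
  qed
  also have "\<dots> = (-1) ^ k * of_nat (Dnorm m n k)"
    unfolding of_nat_sum[symmetric] sum_distrib_right[symmetric] binomial_sum
      lowest_weight_vector_corner[OF assms] Dnorm_def
    by (simp add: algebra_simps)
  finally show ?thesis .
qed

text \<open>Write f^N phi_k' as a multiple of e f^(N+1) phi_k' and move e onto the highest weight vector phi_k.\<close>
lemma pairing_phi_f_pow_phi_less:
  assumes "k' < k" "k \<le> min m n"
  shows "pairing m n (phi m n k) (f_pow m n (m + n - k - k') (phi m n k')) = 0"
proof -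
  define N where "N = m + n - k - k'"
  have k': "k' \<le> min m n"
    using assms by simp
  define c :: complex where "c = of_nat (Suc N) * (of_nat (m + n) - of_nat (2 * k' + N))"
  have "(of_nat (m + n) :: complex) \<noteq> of_nat (2 * k' + N)"
    unfolding of_nat_eq_iff N_def using assms by auto
  then have "c \<noteq> 0"
    unfolding c_def by (simp del: of_nat_Suc)
  moreover have "e_act m n (f_pow m n (Suc N) (phi m n k')) = (\<lambda>a b. c * f_pow m n N (phi m n k') a b)"
    unfolding c_def by (rule e_act_f_pow_highest_weight[OF in_box_phi[OF k'] homogeneous_phi[OF k'] e_act_phi[OF k']])
  ultimately have "f_pow m n N (phi m n k') = (\<lambda>a b. inverse c * e_act m n (f_pow m n (Suc N) (phi m n k')) a b)"
    by (simp add: fun_eq_iff)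
  then have "pairing m n (phi m n k) (f_pow m n N (phi m n k')) =
      inverse c * pairing m n (e_act m n (phi m n k)) (f_pow m n (Suc N) (phi m n k'))"
    by (simp add: pairing_scale_right pairing_e_act)
  also have "\<dots> = 0"
    by (simp add: e_act_phi[OF assms(2)] pairing_zero_left)
  finally show ?thesis
    unfolding N_def .
qed

lemma pairing_f_pow_phi:
  assumes "r \<le> min m n" "r' \<le> min m n" "s + s' + r + r' = m + n"
  shows "pairing m n (f_pow m n s (phi m n r)) (f_pow m n s' (phi m n r'))
     = (if r = r' then (-1) ^ r * of_nat (Dnorm m n r) else 0)"
proof -
  have "pairing m n (f_pow m n s (phi m n r)) (f_pow m n s' (phi m n r'))
      = pairing m n (phi m n r) (f_pow m n (s + s') (phi m n r'))"
    by (simp add: pairing_f_pow f_pow_add)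
  also have "\<dots> = (if r = r' then (-1) ^ r * of_nat (Dnorm m n r) else 0)"
  proof (cases r r' rule: linorder_cases)
    case less
    have "s + s' = m + n - r' - r"
      using assms(3) by arith
    then have "pairing m n (phi m n r) (f_pow m n (s + s') (phi m n r')) =
        pairing m n (f_pow m n (m + n - r' - r) (phi m n r')) (phi m n r)"
      by (simp only: pairing_commute[of m n "phi m n r"])
    also have "\<dots> = pairing m n (phi m n r') (f_pow m n (m + n - r' - r) (phi m n r))"
      by (rule pairing_f_pow)
    finally show ?thesis
      using pairing_phi_f_pow_phi_less[OF less assms(2)] less by simp
  next
    case equal
    then have "s + s' = m + n - 2 * r"
      using assms(3) by arith
    then show ?thesis
      using pairing_phi_lowest_weight_vector[OF assms(1)] equal by simp
  next
    case greater
    then have "s + s' = m + n - r - r'"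
      using assms(3) by arith
    then show ?thesis
      using pairing_phi_f_pow_phi_less[OF greater assms(1)] greater by simp
  qed
  finally show ?thesis .
qed

lemma Dnorm_pos:
  assumes "k \<le> min m n"
  shows "Dnorm m n k > 0"
proof -
  have "k \<le> m + n - k + 1" "m - k \<le> m + n - 2 * k"
    using assms by arith+
  then show ?thesis
    unfolding Dnorm_def by simp
qed

section \<open>Clebsch--Gordan coefficients\<close>

text \<open>The dimension of the weight space spanned by the f^a phi_m \<otimes> f^b phi_n with a + b = p, which is
  also the number of k admissible for it.\<close>
definition weight_dim :: "nat \<Rightarrow> nat \<Rightarrow> nat \<Rightarrow> nat" where
  "weight_dim m n p = min (min m n) (min p (m + n - p)) + 1"

lemma adm_iff_less_weight_dim: "i + j \<le> m + n \<Longrightarrow> adm m n i j k \<longleftrightarrow> k < weight_dim m n (i + j)"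
  unfolding adm_def weight_dim_def by arith

lemma less_weight_dim_D:
  assumes "r < weight_dim m n p"
  shows "r \<le> min m n" "r \<le> p" "r \<le> m + n - p"
  using assms unfolding weight_dim_def by arith+

lemma pairing_homogeneous:
  assumes "homogeneous p v" "p \<le> m + n"
  shows "pairing m n v w = (\<Sum>c<weight_dim m n p.
     v (p - n + c) (p - (p - n + c)) * w (m - (p - n + c)) (n - (p - (p - n + c))))"
proof -
  let ?F = "\<lambda>a. v a (p - a) * w (m - a) (n - (p - a))"
  let ?A = "{a. a \<le> m \<and> a \<le> p \<and> p - a \<le> n}"
  have "(\<Sum>b\<le>n. v a b * w (m - a) (n - b)) = (if a \<in> ?A then ?F a else 0)" if "a \<le> m" for a
  proof -
    have "(\<Sum>b\<le>n. v a b * w (m - a) (n - b)) = (\<Sum>b\<le>n. if b = p - a then (if a \<le> p then ?F a else 0) else 0)"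
      by (rule sum.cong[OF refl]) (use assms(1) in \<open>auto simp: homogeneous_def\<close>)
    then show ?thesis
      using that by (simp add: sum.delta')
  qed
  then have "pairing m n v w = (\<Sum>a\<le>m. if a \<in> ?A then ?F a else 0)"
    unfolding pairing_def by (intro sum.cong refl) simp
  also have "\<dots> = sum ?F ?A"
    by (subst sum.inter_restrict[symmetric]) (auto intro: sum.cong)
  also have "?A = (\<lambda>c. p - n + c) ` {..<weight_dim m n p}"
  proof (intro equalityI subsetI)
    fix a
    assume "a \<in> ?A"
    then have "a - (p - n) < weight_dim m n p" "a = p - n + (a - (p - n))"
      using assms(2) unfolding weight_dim_def by auto
    then show "a \<in> (\<lambda>c. p - n + c) ` {..<weight_dim m n p}"
      by blast
  qed (use assms(2) in \<open>auto simp: weight_dim_def\<close>)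
  also have "sum ?F ((\<lambda>c. p - n + c) ` {..<weight_dim m n p}) = (\<Sum>c<weight_dim m n p. ?F (p - n + c))"
    by (subst sum.reindex) (auto simp: inj_on_def)
  finally show ?thesis .
qed

text \<open>Column c of the weight matrix is the point a = p - n + c of the antidiagonal a + b = p, while row c
  of the dual reads the reflected point (m - a, n - b); their product is thus a matrix of pairings.\<close>
definition weight_matrix :: "nat \<Rightarrow> nat \<Rightarrow> nat \<Rightarrow> complex mat" where
  "weight_matrix m n p = mat (weight_dim m n p) (weight_dim m n p)
     (\<lambda>(r, c). f_pow m n (p - r) (phi m n r) (p - n + c) (p - (p - n + c)))"

definition dual_weight_matrix :: "nat \<Rightarrow> nat \<Rightarrow> nat \<Rightarrow> complex mat" where
  "dual_weight_matrix m n p = mat (weight_dim m n p) (weight_dim m n p)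
     (\<lambda>(c, r). (-1) ^ r / of_nat (Dnorm m n r) *
        f_pow m n (m + n - p - r) (phi m n r) (m - (p - n + c)) (n - (p - (p - n + c))))"

lemma index_mult_mat_square:
  "A \<in> carrier_mat d d \<Longrightarrow> B \<in> carrier_mat d d \<Longrightarrow> r < d \<Longrightarrow> r' < d \<Longrightarrow>
   (A * B) $$ (r, r') = (\<Sum>c<d. A $$ (r, c) * B $$ (c, r'))"
  by (auto simp: scalar_prod_def lessThan_atLeast0 intro!: sum.cong)

lemma weight_matrix_mult_dual:
  assumes "p \<le> m + n"
  shows "weight_matrix m n p * dual_weight_matrix m n p = 1\<^sub>m (weight_dim m n p)"
proof (rule eq_matI)
  fix r r'
  assume "r < dim_row (1\<^sub>m (weight_dim m n p) :: complex mat)" "r' < dim_col (1\<^sub>m (weight_dim m n p) :: complex mat)"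
  then have r: "r < weight_dim m n p" and r': "r' < weight_dim m n p"
    by auto
  have carrier: "weight_matrix m n p \<in> carrier_mat (weight_dim m n p) (weight_dim m n p)"
    "dual_weight_matrix m n p \<in> carrier_mat (weight_dim m n p) (weight_dim m n p)"
    by (simp_all add: weight_matrix_def dual_weight_matrix_def)
  have homogeneous: "homogeneous p (f_pow m n (p - r) (phi m n r))"
    using homogeneous_f_pow[OF homogeneous_phi, of r m n "p - r"] less_weight_dim_D[OF r] by simp
  have "(weight_matrix m n p * dual_weight_matrix m n p) $$ (r, r') =
      (\<Sum>c<weight_dim m n p. weight_matrix m n p $$ (r, c) * dual_weight_matrix m n p $$ (c, r'))"
    by (rule index_mult_mat_square[OF carrier r r'])
  also have "\<dots> = (\<Sum>c<weight_dim m n p. (-1) ^ r' / of_nat (Dnorm m n r') *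
      (f_pow m n (p - r) (phi m n r) (p - n + c) (p - (p - n + c)) *
       f_pow m n (m + n - p - r') (phi m n r') (m - (p - n + c)) (n - (p - (p - n + c)))))"
    by (rule sum.cong[OF refl]) (simp add: weight_matrix_def dual_weight_matrix_def r r')
  also have "\<dots> = (-1) ^ r' / of_nat (Dnorm m n r') *
      pairing m n (f_pow m n (p - r) (phi m n r)) (f_pow m n (m + n - p - r') (phi m n r'))"
    unfolding pairing_homogeneous[OF homogeneous assms] by (simp only: sum_distrib_left)
  also have "\<dots> = (1\<^sub>m (weight_dim m n p) :: complex mat) $$ (r, r')"
    using less_weight_dim_D[OF r] less_weight_dim_D[OF r'] Dnorm_pos[of r' m n] r r' assms
    by (simp add: pairing_f_pow_phi flip: power_add mult_2)
  finally show "(weight_matrix m n p * dual_weight_matrix m n p) $$ (r, r') =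
      (1\<^sub>m (weight_dim m n p) :: complex mat) $$ (r, r')" .
qed (simp_all add: weight_matrix_def dual_weight_matrix_def)

lemma dual_weight_matrix_mult:
  "p \<le> m + n \<Longrightarrow> dual_weight_matrix m n p * weight_matrix m n p = 1\<^sub>m (weight_dim m n p)"
  by (rule mat_mult_left_right_inverse[OF _ _ weight_matrix_mult_dual])
    (simp_all add: weight_matrix_def dual_weight_matrix_def)

definition is_CG_expansion :: "nat \<Rightarrow> nat \<Rightarrow> nat \<Rightarrow> nat \<Rightarrow> (nat \<Rightarrow> complex) \<Rightarrow> bool" where
  "is_CG_expansion m n i j C \<longleftrightarrow> (\<forall>k. \<not> adm m n i j k \<longrightarrow> C k = 0) \<and>
     basis_vec m n i j = (\<lambda>a b. \<Sum>k = 0..min m n. C k * f_pow m n (i + j - k) (phi m n k) a b)"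

definition CG_formula :: "nat \<Rightarrow> nat \<Rightarrow> nat \<Rightarrow> nat \<Rightarrow> nat \<Rightarrow> complex" where
  "CG_formula m n i j k = (if adm m n i j k
     then (-1) ^ k / of_nat (Dnorm m n k) * c_coord m n k (m - i) (n - j) else 0)"

text \<open>Pairing an expansion with f^(m+n-i-j-k) phi_k isolates the coefficient of k by orthogonality.\<close>
lemma is_CG_expansion_unique:
  assumes "is_CG_expansion m n i j C" "i \<le> m" "j \<le> n"
  shows "C = CG_formula m n i j"
proof
  fix k
  have vanish: "C k = 0" if "\<not> adm m n i j k" for k
    using assms(1) that unfolding is_CG_expansion_def by blast
  show "C k = CG_formula m n i j k"
  proof (cases "adm m n i j k")
    case True
    then have k: "k \<le> min m n" "k \<le> i + j" "i + j + k \<le> m + n"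
      unfolding adm_def by auto
    let ?dual = "f_pow m n (m + n - (i + j) - k) (phi m n k)"
    have "c_coord m n k (m - i) (n - j) = pairing m n (basis_vec m n i j) ?dual"
      using assms(2,3) k by (simp add: pairing_basis_vec_left c_coord_def)
    also have "\<dots> = (\<Sum>k' = 0..min m n. C k' * pairing m n (f_pow m n (i + j - k') (phi m n k')) ?dual)"
      using assms(1) unfolding is_CG_expansion_def by (simp add: pairing_sum_left)
    also have "\<dots> = (\<Sum>k' = 0..min m n. if k' = k then C k * ((-1) ^ k * of_nat (Dnorm m n k)) else 0)"
    proof (rule sum.cong[OF refl])
      fix k'
      assume "k' \<in> {0..min m n}"
      then show "C k' * pairing m n (f_pow m n (i + j - k') (phi m n k')) ?dual =
          (if k' = k then C k * ((-1) ^ k * of_nat (Dnorm m n k)) else 0)"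
        using k vanish[of k'] by (cases "adm m n i j k'") (auto simp: adm_def pairing_f_pow_phi)
    qed
    also have "\<dots> = C k * ((-1) ^ k * of_nat (Dnorm m n k))"
      using k by simp
    finally show ?thesis
      using True Dnorm_pos[OF k(1)] by (simp add: CG_formula_def field_simps power2_eq_square flip: power_add)
  qed (simp add: vanish CG_formula_def)
qed

lemma f_pow_phi_off_antidiagonal:
  assumes "r \<le> min m n" "r \<le> p" "\<not> (a \<le> m \<and> b \<le> n \<and> a + b = p)"
  shows "f_pow m n (p - r) (phi m n r) a b = 0"
proof (rule in_box_homogeneous_zero[OF _ _ assms(3)])
  show "in_box m n (f_pow m n (p - r) (phi m n r))"
    by (rule in_box_f_pow[OF in_box_phi[OF assms(1)]])
  have "homogeneous (r + (p - r)) (f_pow m n (p - r) (phi m n r))"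
    by (rule homogeneous_f_pow[OF homogeneous_phi[OF assms(1)]])
  then show "homogeneous p (f_pow m n (p - r) (phi m n r))"
    using assms(2) by simp
qed

lemma sum_CG_formula_eq_matrix_entry:
  assumes "i \<le> m" "j \<le> n" "a \<le> m" "b \<le> n" "a + b = i + j"
  defines "p \<equiv> i + j"
  shows "(\<Sum>r<weight_dim m n p. CG_formula m n i j r * f_pow m n (p - r) (phi m n r) a b) =
    (dual_weight_matrix m n p * weight_matrix m n p) $$ (i - (p - n), a - (p - n))"
proof -
  define d c c0 where "d = weight_dim m n p" and "c = a - (p - n)" and "c0 = i - (p - n)"
  have c: "c < d" "p - n + c = a" "p - a = b"
    using assms unfolding c_def d_def p_def weight_dim_def by arith+
  have c0: "c0 < d" "p - n + c0 = i" "n - (p - i) = n - j" "m + n - p - r = m - i + (n - j) - r" for r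
    using assms unfolding c0_def d_def p_def weight_dim_def by arith+
  have carrier: "weight_matrix m n p \<in> carrier_mat d d" "dual_weight_matrix m n p \<in> carrier_mat d d"
    unfolding d_def by (simp_all add: weight_matrix_def dual_weight_matrix_def)
  have "(\<Sum>r<d. CG_formula m n i j r * f_pow m n (p - r) (phi m n r) a b) =
      (\<Sum>r<d. dual_weight_matrix m n p $$ (c0, r) * weight_matrix m n p $$ (r, c))"
  proof (rule sum.cong[OF refl])
    fix r
    assume "r \<in> {..<d}"
    then have r: "r < d" "adm m n i j r"
      using adm_iff_less_weight_dim[of i j m n r] assms unfolding d_def p_def by auto
    have "dual_weight_matrix m n p $$ (c0, r) = CG_formula m n i j r"
      using r c0 unfolding dual_weight_matrix_def CG_formula_def c_coord_def d_def by simp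
    moreover have "weight_matrix m n p $$ (r, c) = f_pow m n (p - r) (phi m n r) a b"
      using r c unfolding weight_matrix_def d_def by simp
    ultimately show "CG_formula m n i j r * f_pow m n (p - r) (phi m n r) a b =
        dual_weight_matrix m n p $$ (c0, r) * weight_matrix m n p $$ (r, c)"
      by simp
  qed
  also have "\<dots> = (dual_weight_matrix m n p * weight_matrix m n p) $$ (c0, c)"
    by (rule index_mult_mat_square[symmetric, OF carrier(2,1) c0(1) c(1)])
  finally show ?thesis
    unfolding c_def c0_def d_def .
qed

lemma is_CG_expansion_CG_formula:
  assumes "i \<le> m" "j \<le> n"
  shows "is_CG_expansion m n i j (CG_formula m n i j)"
  unfolding is_CG_expansion_def
proof (intro conjI allI impI ext)
  define p where "p = i + j"
  have pmn: "p \<le> m + n"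
    using assms unfolding p_def by simp
  fix a b
  have "(\<Sum>k = 0..min m n. CG_formula m n i j k * f_pow m n (p - k) (phi m n k) a b) =
      (\<Sum>r<weight_dim m n p. CG_formula m n i j r * f_pow m n (p - r) (phi m n r) a b)"
    using pmn less_weight_dim_D(1)
    by (intro sum.mono_neutral_right) (auto simp: p_def CG_formula_def adm_iff_less_weight_dim)
  also have "\<dots> = basis_vec m n i j a b"
  proof (cases "a \<le> m \<and> b \<le> n \<and> a + b = p")
    case True
    then have "i - (p - n) < weight_dim m n p" "a - (p - n) < weight_dim m n p"
      "i - (p - n) = a - (p - n) \<longleftrightarrow> a = i \<and> b = j"
      using assms unfolding p_def weight_dim_def by arith+
    then show ?thesis
      using True assms sum_CG_formula_eq_matrix_entry[of i m j n a b] dual_weight_matrix_mult[OF pmn]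
      unfolding p_def by (auto simp: basis_vec_def)
  next
    case False
    then show ?thesis
      using assms less_weight_dim_D(1,2) f_pow_phi_off_antidiagonal
      by (auto simp: basis_vec_def p_def)
  qed
  finally show "basis_vec m n i j a b = (\<Sum>k = 0..min m n. CG_formula m n i j k * f_pow m n (i + j - k) (phi m n k) a b)"
    unfolding p_def ..
qed (simp add: CG_formula_def)

lemma CG_family_eq:
  "i \<le> m \<Longrightarrow> j \<le> n \<Longrightarrow> CG_family m n i j = CG_formula m n i j"
  unfolding CG_family_def is_CG_expansion_def[symmetric]
  by (blast intro: the_equality is_CG_expansion_CG_formula is_CG_expansion_unique)

lemma Dnorm_eq_multinomial:
  assumes "k \<le> min m n"
  shows "real (Dnorm m n k) = real (m + n - k + 1) / real (m + n - 2 * k + 1)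
          * (fact (m + n - k) / (fact (m - k) * fact (n - k) * fact k))"
proof -
  define N L where "N = m + n - k" and "L = m + n - 2 * k"
  have "k \<le> Suc N" "Suc N - k = Suc L" "m - k \<le> L" "L - (m - k) = n - k"
    using assms unfolding N_def L_def by arith+
  then have "real (Dnorm m n k) = (fact (Suc N) / (fact k * fact (Suc L))) * (fact L / (fact (m - k) * fact (n - k)))"
    unfolding Dnorm_def N_def[symmetric] L_def[symmetric]
    by (simp add: binomial_fact Suc_eq_plus1[symmetric])
  also have "\<dots> = real (Suc N) / real (Suc L) * (fact N / (fact (m - k) * fact (n - k) * fact k))"
    unfolding fact_Suc by (simp add: divide_simps del: of_nat_Suc)
  finally show ?thesis
    unfolding N_def L_def by simp
qed

theorem theorem4p10:
  fixes m n k i j :: nat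
  assumes "k \<le> min m n" and "i \<le> m" and "j \<le> n"
    and "k \<le> i + j" and "i + j \<le> m + n - k"
  shows "CG m n k i j = (-1) ^ k / of_nat (Dnorm m n k) * c_coord m n k (m - i) (n - j)
     \<and> (real (Dnorm m n k) = real (m + n - k + 1) / real (m + n - 2 * k + 1)
          * (fact (m + n - k) / (fact (m - k) * fact (n - k) * fact k)))"
proof
  have "adm m n i j k"
    using assms unfolding adm_def by arith
  then show "CG m n k i j = (-1) ^ k / of_nat (Dnorm m n k) * c_coord m n k (m - i) (n - j)"
    using assms(2,3) by (simp add: CG_def CG_family_eq CG_formula_def)
qed (rule Dnorm_eq_multinomial[OF assms(1)])

end
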